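(* Let $\mathcal{T}$ be a planar triangulation, $m\in\mathbb{Z}_{\ge 0}$, $r\in\mathbb{Z}_{\ge -1}$, and $\mathbf{r}$ a smoothness distribution with $\mathbf{r}(\tau)\in\{r,-1\}$ for every interior edge $\tau$, such that $\mathcal{Q}^{\mathbf r}$ is lower-acyclic. Let $\sigma$ be a face bounded by interior edges $\tau_1,\tau_2,\tau_3$, and let $\gamma_i=\tau_i\cap\tau_{i+1}$ (indices cyclic in $1,2,3$) be interior vertices of $\mathcal{T}$. Assume that for all $i\in\{1,2,3\}$: $\mathbf{r}(\tau_i)=r$, and $\mathbf{r}(\tau)\neq -1$ for every edge $\tau$ incident on $\gamma_i$. Let $\ell_i$ be an affine-linear form vanishing on $\tau_i$, and let $$\phi:\bigoplus_{i=1}^3{\mathcal{P}}_m/\langle\ell_i^{r+1}\rangle\longrightarrow\bigoplus_{i=1}^3{\mathcal{P}}_m/\mathfrak{J}^{\mathbf r}_{\gamma_i},\qquad (a_1,a_2,a_3)\mapsto(-a_1+a_2,\,-a_2+a_3,\,a_1-a_3).$$ If the cokernel of $\phi$ is trivial, then $\mathcal{Q}^{\mathbf s}$ is lower-acyclic, where $\mathbf{s}(\tau)=\mathbf{r}(\tau)$ for interior edges $\tau\notin\{\tau_1,\tau_2,\tau_3\}$ and $\mathbf{s}(\tau_i)=-1$ for $i=1,2,3$.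
   Context: $\mathcal{T}$ is a finite planar mesh: a subdivision of a closed polygonal region $\Omega\subset\mathbb{R}^2$ (possibly not simply connected) into closed polygonal faces (here triangles) meeting along straight edges and vertices. An edge or vertex is interior if it is not contained in $\partial\Omega$; $\mathcal{T}^\circ_1,\mathcal{T}^\circ_0$ denote interior edges and interior vertices, $\mathcal{T}_2$ the faces. ${\mathcal{P}}_m$ is the space of real bivariate polynomials of total degree at most $m$; for polynomials $f_1,\dots,f_k$, $\langle f_1,\dots,f_k\rangle$ denotes the subspace of ${\mathcal{P}}_m$ of all polynomial combinations $\sum g_if_i$ lying in ${\mathcal{P}}_m$. A smoothness distribution is a map $\mathbf{r}:\mathcal{T}^\circ_1\to\mathbb{Z}_{\ge -1}$. For $\tau\in\mathcal{T}^\circ_1$ let $\ell_\tau$ be a nonzero affine-linear polynomial vanishing on $\tau$ and $\mathfrak{J}^{\mathbf r}_\tau=\langle \ell_\tau^{\mathbf r(\tau)+1}\rangle$ (equal to ${\mathcal{P}}_m$ if $\mathbf r(\tau)=-1$); for $\gamma\in\mathcal{T}^\circ_0$, $\mathfrak{J}^{\mathbf r}_\gamma=\sum_{\tau\ni\gamma}\mathfrak{J}^{\mathbf r}_\tau$ over interior edges containing $\gamma$. $\mathcal{C}$ is the chain complex $\bigoplus_{\sigma\in\mathcal{T}_2}{\mathcal{P}}_m\to\bigoplus_{\tau\in\mathcal{T}^\circ_1}{\mathcal{P}}_m\to\bigoplus_{\gamma\in\mathcal{T}^\circ_0}{\mathcal{P}}_m$ (degrees $2,1,0$) with the cellular boundary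 maps of $\mathcal{T}$ relative to $\partial\Omega$ (signs $\pm1$ from fixed orientations). $\mathcal{I}^{\mathbf r}$ is the subcomplex $0\to\bigoplus_{\tau}\mathfrak{J}^{\mathbf r}_\tau\to\bigoplus_{\gamma}\mathfrak{J}^{\mathbf r}_\gamma$ and $\mathcal{Q}^{\mathbf r}=\mathcal{C}/\mathcal{I}^{\mathbf r}$; $H_2(\mathcal{Q}^{\mathbf r})$ is the space of piecewise polynomials in ${\mathcal{P}}_m$ that are $C^{\mathbf r(\tau)}$ across each interior edge $\tau$. $\mathcal{Q}^{\mathbf r}$ is lower-acyclic if $H_1(\mathcal{Q}^{\mathbf r})=H_0(\mathcal{Q}^{\mathbf r})=0$. *)

theory Defs
  imports "HOL-Analysis.Analysis"
begin

text \<open>Vertices have type 'v (with a linear order, used only to fix orientations);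
  p gives vertex coordinates in the plane; T is the set of faces (3-element vertex sets).\<close>

definition face_hull :: "('v \<Rightarrow> real \<times> real) \<Rightarrow> 'v set \<Rightarrow> (real \<times> real) set" where
  "face_hull p s = convex hull (p ` s)"

definition planar_triangulation :: "('v \<Rightarrow> real \<times> real) \<Rightarrow> 'v set set \<Rightarrow> bool" where
  "planar_triangulation p T \<longleftrightarrow>
     finite T \<and> T \<noteq> {} \<and>
     (\<forall>\<sigma>\<in>T. finite \<sigma> \<and> card \<sigma> = 3 \<and> \<not> collinear (p ` \<sigma>)) \<and>
     inj_on p (\<Union>T) \<and>
     (\<forall>\<sigma>\<in>T. \<forall>\<sigma>'\<in>T. face_hull p \<sigma> \<inter> face_hull p \<sigma>' = face_hull p (\<sigma> \<inter> \<sigma>'))"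

definition region :: "('v \<Rightarrow> real \<times> real) \<Rightarrow> 'v set set \<Rightarrow> (real \<times> real) set" where
  "region p T = (\<Union>\<sigma>\<in>T. face_hull p \<sigma>)"

definition edges :: "'v set set \<Rightarrow> 'v set set" where
  "edges T = {\<tau>. card \<tau> = 2 \<and> (\<exists>\<sigma>\<in>T. \<tau> \<subseteq> \<sigma>)}"

definition int_edges :: "('v \<Rightarrow> real \<times> real) \<Rightarrow> 'v set set \<Rightarrow> 'v set set" where
  "int_edges p T = {\<tau>\<in>edges T. \<not> (face_hull p \<tau> \<subseteq> frontier (region p T))}"

definition int_verts :: "('v \<Rightarrow> real \<times> real) \<Rightarrow> 'v set set \<Rightarrow> 'v set" where
  "int_verts p T = {v\<in>\<Union>T. p v \<notin> frontier (region p T)}"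

definition poly_le :: "nat \<Rightarrow> (real \<times> real \<Rightarrow> real) \<Rightarrow> bool" where
  "poly_le m f \<longleftrightarrow> (\<exists>c :: nat \<Rightarrow> nat \<Rightarrow> real.
      \<forall>z. f z = (\<Sum>i\<le>m. \<Sum>j\<le>m - i. c i j * fst z ^ i * snd z ^ j))"

definition is_poly :: "(real \<times> real \<Rightarrow> real) \<Rightarrow> bool" where
  "is_poly f \<longleftrightarrow> (\<exists>n. poly_le n f)"

text \<open>Canonical nonzero affine-linear form vanishing on the line through the edge
  (any other choice differs by a nonzero scalar and gives the same spaces below).\<close>
definition edge_form :: "('v::linorder \<Rightarrow> real \<times> real) \<Rightarrow> 'v set \<Rightarrow> real \<times> real \<Rightarrow> real" where
  "edge_form p \<tau> z =
     (let a = p (Min \<tau>); b = p (Max \<tau>) in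
      (fst b - fst a) * (snd z - snd a) - (snd b - snd a) * (fst z - fst a))"

definition gen1 :: "nat \<Rightarrow> (real \<times> real \<Rightarrow> real) \<Rightarrow> (real \<times> real \<Rightarrow> real) set" where
  "gen1 m f = {h. poly_le m h \<and> (\<exists>g. is_poly g \<and> (\<forall>z. h z = g z * f z))}"

definition J_edge :: "nat \<Rightarrow> ('v::linorder \<Rightarrow> real \<times> real) \<Rightarrow> ('v set \<Rightarrow> int) \<Rightarrow> 'v set
    \<Rightarrow> (real \<times> real \<Rightarrow> real) set" where
  "J_edge m p r \<tau> = gen1 m (\<lambda>z. edge_form p \<tau> z ^ nat (r \<tau> + 1))"

definition edges_at :: "('v \<Rightarrow> real \<times> real) \<Rightarrow> 'v set set \<Rightarrow> 'v \<Rightarrow> 'v set set" where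
  "edges_at p T \<gamma> = {\<tau>\<in>int_edges p T. \<gamma> \<in> \<tau>}"

definition J_vert :: "nat \<Rightarrow> ('v::linorder \<Rightarrow> real \<times> real) \<Rightarrow> 'v set set \<Rightarrow> ('v set \<Rightarrow> int)
    \<Rightarrow> 'v \<Rightarrow> (real \<times> real \<Rightarrow> real) set" where
  "J_vert m p T r \<gamma> = {h. \<exists>H. (\<forall>\<tau>\<in>edges_at p T \<gamma>. H \<tau> \<in> J_edge m p r \<tau>) \<and>
                              (\<forall>z. h z = (\<Sum>\<tau>\<in>edges_at p T \<gamma>. H \<tau> z))}"

text \<open>Orientations are fixed via the linear order on vertices (simplicial convention).\<close>
definition edge_sign :: "'v::linorder set \<Rightarrow> 'v \<Rightarrow> real" where
  "edge_sign \<tau> \<gamma> = (if \<gamma> = Max \<tau> then 1 else -1)"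

definition face_sign :: "'v::linorder set \<Rightarrow> 'v set \<Rightarrow> real" where
  "face_sign \<sigma> \<tau> = (-1) ^ card {x\<in>\<sigma>. x < Min (\<sigma> - \<tau>)}"

definition bd2 :: "'v::linorder set set \<Rightarrow> ('v set \<Rightarrow> real \<times> real \<Rightarrow> real)
    \<Rightarrow> 'v set \<Rightarrow> real \<times> real \<Rightarrow> real" where
  "bd2 T C \<tau> = (\<lambda>z. \<Sum>\<sigma>\<in>{\<sigma>\<in>T. \<tau> \<subseteq> \<sigma>}. face_sign \<sigma> \<tau> * C \<sigma> z)"

definition bd1 :: "('v::linorder \<Rightarrow> real \<times> real) \<Rightarrow> 'v set set \<Rightarrow> ('v set \<Rightarrow> real \<times> real \<Rightarrow> real)
    \<Rightarrow> 'v \<Rightarrow> real \<times> real \<Rightarrow> real" where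
  "bd1 p T A \<gamma> = (\<lambda>z. \<Sum>\<tau>\<in>edges_at p T \<gamma>. edge_sign \<tau> \<gamma> * A \<tau> z)"

text \<open>Lower-acyclicity of \<open>Q^r = C / I^r\<close>: \<open>H_0(Q^r) = 0\<close> and \<open>H_1(Q^r) = 0\<close>, written out
  on representatives.\<close>
definition lower_acyclic :: "nat \<Rightarrow> ('v::linorder \<Rightarrow> real \<times> real) \<Rightarrow> 'v set set
    \<Rightarrow> ('v set \<Rightarrow> int) \<Rightarrow> bool" where
  "lower_acyclic m p T r \<longleftrightarrow>
     (\<forall>G. (\<forall>\<gamma>\<in>int_verts p T. poly_le m (G \<gamma>)) \<longrightarrow>
        (\<exists>A. (\<forall>\<tau>\<in>int_edges p T. poly_le m (A \<tau>)) \<and>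
             (\<forall>\<gamma>\<in>int_verts p T. (\<lambda>z. bd1 p T A \<gamma> z - G \<gamma> z) \<in> J_vert m p T r \<gamma>))) \<and>
     (\<forall>A. (\<forall>\<tau>\<in>int_edges p T. poly_le m (A \<tau>)) \<and>
          (\<forall>\<gamma>\<in>int_verts p T. bd1 p T A \<gamma> \<in> J_vert m p T r \<gamma>) \<longrightarrow>
        (\<exists>C. (\<forall>\<sigma>\<in>T. poly_le m (C \<sigma>)) \<and>
             (\<forall>\<tau>\<in>int_edges p T. (\<lambda>z. bd2 T C \<tau> z - A \<tau> z) \<in> J_edge m p r \<tau>)))"

definition smoothness_distribution :: "('v \<Rightarrow> real \<times> real) \<Rightarrow> 'v set set \<Rightarrow> ('v set \<Rightarrow> int) \<Rightarrow> bool" where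
  "smoothness_distribution p T r \<longleftrightarrow> (\<forall>\<tau>\<in>int_edges p T. r \<tau> \<ge> -1)"

end

theory Submission imports Defs begin

text \<open>Setting \<open>r\<close> to \<open>-1\<close> on \<open>\<tau>\<^sub>1, \<tau>\<^sub>2, \<tau>\<^sub>3\<close> only enlarges the spaces \<open>J_\<tau>\<close> and
  \<open>J_\<gamma>\<close>, so \<open>H\<^sub>0\<close> stays zero. A 1-cycle \<open>A\<close> of the relaxed complex satisfies the old vertex
  conditions except at \<open>\<gamma>\<^sub>1, \<gamma>\<^sub>2, \<gamma>\<^sub>3\<close>. Since \<open>\<phi>\<close> is onto, there are \<open>a\<^sub>1, a\<^sub>2, a\<^sub>3\<close> such
  that the chain \<open>\<Sum> a\<^sub>i \<tau>\<^sub>i\<close>, with the \<open>\<tau>\<^sub>i\<close> oriented cyclically around the triangle, has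
  boundary \<open>\<phi>(a) \<equiv> -\<partial>A\<close> modulo \<open>J_\<gamma>\<^sub>i\<close> at the \<open>\<gamma>\<^sub>i\<close> and zero elsewhere. Adding it makes \<open>A\<close>
  a cycle of the original complex, which bounds by hypothesis; on the \<open>\<tau>\<^sub>i\<close> the bounding
  condition has become vacuous, and elsewhere the chain added is zero.\<close>

lemma poly_le_lin:
  assumes "poly_le m f" "poly_le m g"
  shows "poly_le m (\<lambda>z. a * f z + b * g z)"
proof -
  obtain c where c: "\<forall>z. f z = (\<Sum>i\<le>m. \<Sum>j\<le>m - i. c i j * fst z ^ i * snd z ^ j)"
    using assms(1) unfolding poly_le_def by blast
  obtain d where d: "\<forall>z. g z = (\<Sum>i\<le>m. \<Sum>j\<le>m - i. d i j * fst z ^ i * snd z ^ j)"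
    using assms(2) unfolding poly_le_def by blast
  show ?thesis
    unfolding poly_le_def
    by (rule exI[of _ "\<lambda>i j. a * c i j + b * d i j"])
      (simp add: c d sum_distrib_left sum.distrib algebra_simps)
qed

lemma poly_le_zero: "poly_le m (\<lambda>z. 0)"
  unfolding poly_le_def by (rule exI[of _ "\<lambda>i j. 0"]) simp

lemma poly_le_add: "poly_le m f \<Longrightarrow> poly_le m g \<Longrightarrow> poly_le m (\<lambda>z. f z + g z)"
  using poly_le_lin[of m f g 1 1] by simp

lemma poly_le_diff: "poly_le m f \<Longrightarrow> poly_le m g \<Longrightarrow> poly_le m (\<lambda>z. f z - g z)"
  using poly_le_lin[of m f g 1 "-1"] by simp

lemma poly_le_cmult: "poly_le m f \<Longrightarrow> poly_le m (\<lambda>z. a * f z)"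
  using poly_le_lin[of m f f a 0] by simp

lemma poly_le_sum: "(\<And>i. i \<in> S \<Longrightarrow> poly_le m (f i)) \<Longrightarrow> poly_le m (\<lambda>z. \<Sum>i\<in>S. f i z)"
proof (induction S rule: infinite_finite_induct)
  case (insert x F)
  then show ?case using poly_le_add[of m "f x" "\<lambda>z. \<Sum>i\<in>F. f i z"] by simp
qed (simp_all add: poly_le_zero)

lemma J_edge_subset_poly_le: "J_edge m p r \<tau> \<subseteq> {h. poly_le m h}"
  unfolding J_edge_def gen1_def by auto

lemma poly_le_bd1: "\<forall>\<tau>\<in>int_edges p T. poly_le m (A \<tau>) \<Longrightarrow> poly_le m (bd1 p T A \<gamma>)"
  unfolding bd1_def by (rule poly_le_sum) (auto simp: edges_at_def intro: poly_le_cmult)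

lemma poly_le_bd2: "\<forall>\<sigma>\<in>T. poly_le m (C \<sigma>) \<Longrightarrow> poly_le m (bd2 T C \<tau>)"
  unfolding bd2_def by (rule poly_le_sum) (auto intro: poly_le_cmult)

lemma finite_int_edges:
  assumes "planar_triangulation p T"
  shows "finite (int_edges p T)"
proof -
  have "finite (Pow (\<Union>T))"
    using assms unfolding planar_triangulation_def by auto
  moreover have "int_edges p T \<subseteq> Pow (\<Union>T)"
    unfolding int_edges_def edges_def by auto
  ultimately show ?thesis by (rule finite_subset[rotated])
qed

lemma triangle_edge_eq:
  assumes "card \<sigma> = 3" "card a = 2" "card b = 2" "card c = 2"
    and "a \<subseteq> \<sigma>" "b \<subseteq> \<sigma>" "c \<subseteq> \<sigma>"
    and "a \<inter> b = {g}" "c \<inter> a = {x}" "c \<inter> b = {y}"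
  shows "c = {x, y}" and "x \<noteq> y"
proof -
  have "finite a" "finite b" "finite \<sigma>"
    using assms(1-3) card.infinite by fastforce+
  then have "card (a \<union> b) = 3"
    using card_Un_Int[of a b] assms(2,3,8) by simp
  then have "a \<union> b = \<sigma>"
    using assms(1,5,6) \<open>finite \<sigma>\<close> by (intro card_subset_eq) auto
  then have "c = (c \<inter> a) \<union> (c \<inter> b)"
    using assms(7) by blast
  then show c: "c = {x, y}"
    using assms(9,10) by (simp add: insert_commute)
  show "x \<noteq> y"
    using assms(4) c by auto
qed

lemma triangle_edges:
  assumes "card \<sigma> = 3" "card \<tau>1 = 2" "card \<tau>2 = 2" "card \<tau>3 = 2"
    and "\<tau>1 \<subseteq> \<sigma>" "\<tau>2 \<subseteq> \<sigma>" "\<tau>3 \<subseteq> \<sigma>"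
    and "\<tau>1 \<inter> \<tau>2 = {\<gamma>1}" "\<tau>2 \<inter> \<tau>3 = {\<gamma>2}" "\<tau>3 \<inter> \<tau>1 = {\<gamma>3}"
  shows "\<tau>1 = {\<gamma>1, \<gamma>3}" "\<tau>2 = {\<gamma>2, \<gamma>1}" "\<tau>3 = {\<gamma>3, \<gamma>2}"
    and "\<gamma>1 \<noteq> \<gamma>2" "\<gamma>2 \<noteq> \<gamma>3" "\<gamma>1 \<noteq> \<gamma>3"
proof -
  have swapped: "\<tau>2 \<inter> \<tau>1 = {\<gamma>1}" "\<tau>3 \<inter> \<tau>2 = {\<gamma>2}" "\<tau>1 \<inter> \<tau>3 = {\<gamma>3}"
    using assms(8-10) by (simp_all add: Int_commute)
  show "\<tau>1 = {\<gamma>1, \<gamma>3}" "\<gamma>1 \<noteq> \<gamma>3"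
    using triangle_edge_eq[of \<sigma> \<tau>2 \<tau>3 \<tau>1 \<gamma>2 \<gamma>1 \<gamma>3] assms swapped by simp_all
  show "\<tau>2 = {\<gamma>2, \<gamma>1}" "\<gamma>1 \<noteq> \<gamma>2"
    using triangle_edge_eq[of \<sigma> \<tau>3 \<tau>1 \<tau>2 \<gamma>3 \<gamma>2 \<gamma>1] assms swapped by auto
  show "\<tau>3 = {\<gamma>3, \<gamma>2}" "\<gamma>2 \<noteq> \<gamma>3"
    using triangle_edge_eq[of \<sigma> \<tau>1 \<tau>2 \<tau>3 \<gamma>1 \<gamma>3 \<gamma>2] assms swapped by auto
qed

definition H0_trivial :: "nat \<Rightarrow> ('v::linorder \<Rightarrow> real \<times> real) \<Rightarrow> 'v set set
    \<Rightarrow> ('v set \<Rightarrow> int) \<Rightarrow> bool" where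
  "H0_trivial m p T r \<longleftrightarrow>
     (\<forall>G. (\<forall>\<gamma>\<in>int_verts p T. poly_le m (G \<gamma>)) \<longrightarrow>
        (\<exists>A. (\<forall>\<tau>\<in>int_edges p T. poly_le m (A \<tau>)) \<and>
             (\<forall>\<gamma>\<in>int_verts p T. (\<lambda>z. bd1 p T A \<gamma> z - G \<gamma> z) \<in> J_vert m p T r \<gamma>)))"

definition relative_cycle :: "nat \<Rightarrow> ('v::linorder \<Rightarrow> real \<times> real) \<Rightarrow> 'v set set
    \<Rightarrow> ('v set \<Rightarrow> int) \<Rightarrow> ('v set \<Rightarrow> real \<times> real \<Rightarrow> real) \<Rightarrow> bool" where
  "relative_cycle m p T r A \<longleftrightarrow>
     (\<forall>\<tau>\<in>int_edges p T. poly_le m (A \<tau>)) \<and>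
     (\<forall>\<gamma>\<in>int_verts p T. bd1 p T A \<gamma> \<in> J_vert m p T r \<gamma>)"

definition relative_boundary :: "nat \<Rightarrow> ('v::linorder \<Rightarrow> real \<times> real) \<Rightarrow> 'v set set
    \<Rightarrow> ('v set \<Rightarrow> int) \<Rightarrow> ('v set \<Rightarrow> real \<times> real \<Rightarrow> real) \<Rightarrow> bool" where
  "relative_boundary m p T r A \<longleftrightarrow>
     (\<exists>C. (\<forall>\<sigma>\<in>T. poly_le m (C \<sigma>)) \<and>
          (\<forall>\<tau>\<in>int_edges p T. (\<lambda>z. bd2 T C \<tau> z - A \<tau> z) \<in> J_edge m p r \<tau>))"

definition H1_trivial :: "nat \<Rightarrow> ('v::linorder \<Rightarrow> real \<times> real) \<Rightarrow> 'v set set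
    \<Rightarrow> ('v set \<Rightarrow> int) \<Rightarrow> bool" where
  "H1_trivial m p T r \<longleftrightarrow> (\<forall>A. relative_cycle m p T r A \<longrightarrow> relative_boundary m p T r A)"

lemma lower_acyclic_iff: "lower_acyclic m p T r \<longleftrightarrow> H0_trivial m p T r \<and> H1_trivial m p T r"
  unfolding lower_acyclic_def H0_trivial_def H1_trivial_def relative_cycle_def
    relative_boundary_def ..

definition relax_on :: "'v set set \<Rightarrow> ('v set \<Rightarrow> int) \<Rightarrow> 'v set \<Rightarrow> int" where
  "relax_on E r = (\<lambda>\<tau>. if \<tau> \<in> E then -1 else r \<tau>)"

lemma J_edge_relax_on_in: "\<tau> \<in> E \<Longrightarrow> J_edge m p (relax_on E r) \<tau> = {h. poly_le m h}"
  unfolding J_edge_def relax_on_def gen1_def is_poly_def by auto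

lemma J_edge_relax_on_notin: "\<tau> \<notin> E \<Longrightarrow> J_edge m p (relax_on E r) \<tau> = J_edge m p r \<tau>"
  unfolding J_edge_def relax_on_def by simp

lemma J_edge_subset_relax_on: "J_edge m p r \<tau> \<subseteq> J_edge m p (relax_on E r) \<tau>"
proof (cases "\<tau> \<in> E")
  case True
  then show ?thesis using J_edge_subset_poly_le J_edge_relax_on_in by blast
qed (simp add: J_edge_relax_on_notin)

lemma J_vert_subset_relax_on: "J_vert m p T r \<gamma> \<subseteq> J_vert m p T (relax_on E r) \<gamma>"
  unfolding J_vert_def using J_edge_subset_relax_on by blast

lemma J_vert_relax_on_eq:
  assumes "\<forall>\<tau>\<in>edges_at p T \<gamma>. \<tau> \<notin> E"
  shows "J_vert m p T (relax_on E r) \<gamma> = J_vert m p T r \<gamma>"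
proof -
  have "J_edge m p (relax_on E r) \<tau> = J_edge m p r \<tau>" if "\<tau> \<in> edges_at p T \<gamma>" for \<tau>
    using assms that J_edge_relax_on_notin by blast
  then show ?thesis
    unfolding J_vert_def by auto
qed

lemma H0_trivial_relax_on: "H0_trivial m p T r \<Longrightarrow> H0_trivial m p T (relax_on E r)"
  unfolding H0_trivial_def by (fast dest: J_vert_subset_relax_on[THEN subsetD])

lemma relative_boundary_relax_on:
  assumes bound: "relative_boundary m p T r (\<lambda>\<tau> z. A \<tau> z + D \<tau> z)"
    and supp: "\<And>\<tau>. \<tau> \<notin> E \<Longrightarrow> D \<tau> = (\<lambda>z. 0)"
    and poly: "\<forall>\<tau>\<in>int_edges p T. poly_le m (A \<tau>)"
  shows "relative_boundary m p T (relax_on E r) A"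
proof -
  obtain C where pC: "\<forall>\<sigma>\<in>T. poly_le m (C \<sigma>)"
    and hC: "\<forall>\<tau>\<in>int_edges p T. (\<lambda>z. bd2 T C \<tau> z - (A \<tau> z + D \<tau> z)) \<in> J_edge m p r \<tau>"
    using bound unfolding relative_boundary_def by blast
  have "(\<lambda>z. bd2 T C \<tau> z - A \<tau> z) \<in> J_edge m p (relax_on E r) \<tau>" if "\<tau> \<in> int_edges p T" for \<tau>
  proof (cases "\<tau> \<in> E")
    case True
    have "poly_le m (\<lambda>z. bd2 T C \<tau> z - A \<tau> z)"
      using poly_le_diff[OF poly_le_bd2[OF pC]] poly that by blast
    then show ?thesis
      unfolding J_edge_relax_on_in[OF True] by simp
  next
    case False
    have "(\<lambda>z. bd2 T C \<tau> z - (A \<tau> z + D \<tau> z)) \<in> J_edge m p r \<tau>"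
      using hC that by blast
    then show ?thesis
      unfolding supp[OF False] J_edge_relax_on_notin[OF False] by simp
  qed
  with pC show ?thesis
    unfolding relative_boundary_def by blast
qed

lemma H1_trivial_relax_on:
  assumes H1: "H1_trivial m p T r"
    and correction: "\<And>A. relative_cycle m p T (relax_on E r) A \<Longrightarrow>
      \<exists>D. (\<forall>\<tau>. \<tau> \<notin> E \<longrightarrow> D \<tau> = (\<lambda>z. 0)) \<and>
          relative_cycle m p T r (\<lambda>\<tau> z. A \<tau> z + D \<tau> z)"
  shows "H1_trivial m p T (relax_on E r)"
  unfolding H1_trivial_def
proof (intro allI impI)
  fix A assume cyc: "relative_cycle m p T (relax_on E r) A"
  then obtain D where supp: "\<forall>\<tau>. \<tau> \<notin> E \<longrightarrow> D \<tau> = (\<lambda>z. 0)"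
    and "relative_cycle m p T r (\<lambda>\<tau> z. A \<tau> z + D \<tau> z)"
    using correction by blast
  then have bound: "relative_boundary m p T r (\<lambda>\<tau> z. A \<tau> z + D \<tau> z)"
    using H1 unfolding H1_trivial_def by blast
  show "relative_boundary m p T (relax_on E r) A"
    by (rule relative_boundary_relax_on[OF bound]) (use supp cyc in \<open>auto simp: relative_cycle_def\<close>)
qed

lemma bd1_add: "bd1 p T (\<lambda>\<tau> z. A \<tau> z + B \<tau> z) \<gamma> = (\<lambda>z. bd1 p T A \<gamma> z + bd1 p T B \<gamma> z)"
  unfolding bd1_def by (simp add: distrib_left sum.distrib)

definition edge_chain :: "'v::linorder \<Rightarrow> 'v \<Rightarrow> (real \<times> real \<Rightarrow> real)
    \<Rightarrow> 'v set \<Rightarrow> real \<times> real \<Rightarrow> real" where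
  "edge_chain x y a = (\<lambda>\<tau> z. if \<tau> = {x, y} then edge_sign {x, y} y * a z else 0)"

lemma poly_le_edge_chain: "poly_le m a \<Longrightarrow> poly_le m (edge_chain x y a \<tau>)"
  unfolding edge_chain_def by (cases "\<tau> = {x, y}") (simp_all add: poly_le_cmult poly_le_zero)

lemma edge_sign_mult_self: "edge_sign \<tau> \<gamma> * edge_sign \<tau> \<gamma> = 1"
  unfolding edge_sign_def by simp

lemma edge_sign_mult_opposite: "x \<noteq> y \<Longrightarrow> edge_sign {x, y} x * edge_sign {x, y} y = -1"
  unfolding edge_sign_def by (cases "x < y") (auto simp: max_def)

lemma bd1_edge_chain:
  assumes fin: "finite (int_edges p T)" and edge: "{x, y} \<in> int_edges p T" and "x \<noteq> y"
  shows "bd1 p T (edge_chain x y a) \<gamma> z = (if \<gamma> = y then a z else if \<gamma> = x then - a z else 0)"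
proof -
  have "finite (edges_at p T \<gamma>)"
    using fin unfolding edges_at_def by simp
  then have "bd1 p T (edge_chain x y a) \<gamma> z =
      (if {x, y} \<in> edges_at p T \<gamma> then edge_sign {x, y} \<gamma> * edge_sign {x, y} y * a z else 0)"
    unfolding bd1_def edge_chain_def by (simp add: if_distrib cong: if_cong)
  also have "\<dots> = (if \<gamma> = y then a z else if \<gamma> = x then - a z else 0)"
    using edge \<open>x \<noteq> y\<close> edge_sign_mult_self[of "{x, y}" y] edge_sign_mult_opposite[of x y]
    by (auto simp: edges_at_def)
  finally show ?thesis .
qed

definition triangle_map_onto :: "nat \<Rightarrow> ('v::linorder \<Rightarrow> real \<times> real) \<Rightarrow> 'v set set
    \<Rightarrow> ('v set \<Rightarrow> int) \<Rightarrow> 'v \<Rightarrow> 'v \<Rightarrow> 'v \<Rightarrow> bool" where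
  "triangle_map_onto m p T r \<gamma>1 \<gamma>2 \<gamma>3 \<longleftrightarrow>
     (\<forall>b1 b2 b3. poly_le m b1 \<and> poly_le m b2 \<and> poly_le m b3 \<longrightarrow>
        (\<exists>a1 a2 a3. poly_le m a1 \<and> poly_le m a2 \<and> poly_le m a3 \<and>
           (\<lambda>z. - a1 z + a2 z - b1 z) \<in> J_vert m p T r \<gamma>1 \<and>
           (\<lambda>z. - a2 z + a3 z - b2 z) \<in> J_vert m p T r \<gamma>2 \<and>
           (\<lambda>z. a1 z - a3 z - b3 z) \<in> J_vert m p T r \<gamma>3))"

lemma triangle_cycle_correction:
  fixes \<gamma>1 \<gamma>2 \<gamma>3 :: "'v::linorder"
  defines "E \<equiv> {{\<gamma>1, \<gamma>3}, {\<gamma>2, \<gamma>1}, {\<gamma>3, \<gamma>2}}"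
  assumes fin: "finite (int_edges p T)"
    and edges: "{\<gamma>1, \<gamma>3} \<in> int_edges p T" "{\<gamma>2, \<gamma>1} \<in> int_edges p T" "{\<gamma>3, \<gamma>2} \<in> int_edges p T"
    and distinct: "\<gamma>1 \<noteq> \<gamma>2" "\<gamma>2 \<noteq> \<gamma>3" "\<gamma>1 \<noteq> \<gamma>3"
    and onto: "triangle_map_onto m p T r \<gamma>1 \<gamma>2 \<gamma>3"
    and cyc: "relative_cycle m p T (relax_on E r) A"
  shows "\<exists>D. (\<forall>\<tau>. \<tau> \<notin> E \<longrightarrow> D \<tau> = (\<lambda>z. 0)) \<and> relative_cycle m p T r (\<lambda>\<tau> z. A \<tau> z + D \<tau> z)"
proof -
  have pA: "\<forall>\<tau>\<in>int_edges p T. poly_le m (A \<tau>)"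
    and bdA: "\<forall>\<gamma>\<in>int_verts p T. bd1 p T A \<gamma> \<in> J_vert m p T (relax_on E r) \<gamma>"
    using cyc unfolding relative_cycle_def by auto
  have "poly_le m (\<lambda>z. - bd1 p T A \<gamma> z)" for \<gamma>
    using poly_le_cmult[OF poly_le_bd1[OF pA], of "-1"] by simp
  then obtain a1 a2 a3 where pa: "poly_le m a1" "poly_le m a2" "poly_le m a3"
    and j1: "(\<lambda>z. - a1 z + a2 z - - bd1 p T A \<gamma>1 z) \<in> J_vert m p T r \<gamma>1"
    and j2: "(\<lambda>z. - a2 z + a3 z - - bd1 p T A \<gamma>2 z) \<in> J_vert m p T r \<gamma>2"
    and j3: "(\<lambda>z. a1 z - a3 z - - bd1 p T A \<gamma>3 z) \<in> J_vert m p T r \<gamma>3"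
    using onto unfolding triangle_map_onto_def by meson
  define D where "D = (\<lambda>\<tau> z. edge_chain \<gamma>1 \<gamma>3 a1 \<tau> z + edge_chain \<gamma>2 \<gamma>1 a2 \<tau> z
                              + edge_chain \<gamma>3 \<gamma>2 a3 \<tau> z)"
  have supp: "\<forall>\<tau>. \<tau> \<notin> E \<longrightarrow> D \<tau> = (\<lambda>z. 0)"
    unfolding D_def edge_chain_def E_def by auto
  have pD: "poly_le m (D \<tau>)" for \<tau>
    unfolding D_def using pa by (intro poly_le_add poly_le_edge_chain)
  have bdD: "bd1 p T D \<gamma> z =
      (if \<gamma> = \<gamma>1 then - a1 z + a2 z else if \<gamma> = \<gamma>2 then - a2 z + a3 z
       else if \<gamma> = \<gamma>3 then a1 z - a3 z else 0)" for \<gamma> z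
    unfolding D_def bd1_add using distinct
    by (simp add: bd1_edge_chain[OF fin edges(1)] bd1_edge_chain[OF fin edges(2)]
        bd1_edge_chain[OF fin edges(3)])
  have "bd1 p T (\<lambda>\<tau> z. A \<tau> z + D \<tau> z) \<gamma> \<in> J_vert m p T r \<gamma>" if "\<gamma> \<in> int_verts p T" for \<gamma>
  proof (cases "\<gamma> \<in> {\<gamma>1, \<gamma>2, \<gamma>3}")
    case True
    then show ?thesis
      using j1 j2 j3 distinct by (auto simp: bd1_add bdD algebra_simps)
  next
    case False
    then have "J_vert m p T (relax_on E r) \<gamma> = J_vert m p T r \<gamma>"
      by (intro J_vert_relax_on_eq) (auto simp: edges_at_def E_def)
    moreover have "bd1 p T (\<lambda>\<tau> z. A \<tau> z + D \<tau> z) \<gamma> = bd1 p T A \<gamma>"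
      using False by (simp add: bd1_add bdD)
    moreover have "bd1 p T A \<gamma> \<in> J_vert m p T (relax_on E r) \<gamma>"
      using bdA that by blast
    ultimately show ?thesis
      by simp
  qed
  then have "relative_cycle m p T r (\<lambda>\<tau> z. A \<tau> z + D \<tau> z)"
    unfolding relative_cycle_def using pA pD by (auto intro: poly_le_add)
  with supp show ?thesis by blast
qed

theorem mainTheorem2:
  fixes p :: "'v::linorder \<Rightarrow> real \<times> real" and T :: "'v set set"
    and m :: nat and rr :: int and r :: "'v set \<Rightarrow> int"
    and \<sigma> \<tau>1 \<tau>2 \<tau>3 :: "'v set" and \<gamma>1 \<gamma>2 \<gamma>3 :: 'v
  assumes tri: "planar_triangulation p T"
    and rr: "rr \<ge> -1"
    and sd: "smoothness_distribution p T r"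
    and rvals: "\<forall>\<tau>\<in>int_edges p T. r \<tau> \<in> {rr, -1}"
    and acyc: "lower_acyclic m p T r"
    and face: "\<sigma> \<in> T"
    and edges_sub: "\<tau>1 \<subseteq> \<sigma>" "\<tau>2 \<subseteq> \<sigma>" "\<tau>3 \<subseteq> \<sigma>"
    and edges_int: "\<tau>1 \<in> int_edges p T" "\<tau>2 \<in> int_edges p T" "\<tau>3 \<in> int_edges p T"
    and distinct: "\<tau>1 \<noteq> \<tau>2" "\<tau>2 \<noteq> \<tau>3" "\<tau>1 \<noteq> \<tau>3"
    and gam: "\<tau>1 \<inter> \<tau>2 = {\<gamma>1}" "\<tau>2 \<inter> \<tau>3 = {\<gamma>2}" "\<tau>3 \<inter> \<tau>1 = {\<gamma>3}"
    and gam_int: "\<gamma>1 \<in> int_verts p T" "\<gamma>2 \<in> int_verts p T" "\<gamma>3 \<in> int_verts p T"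
    and r_tau: "r \<tau>1 = rr" "r \<tau>2 = rr" "r \<tau>3 = rr"
    and r_inc: "\<forall>\<gamma>\<in>{\<gamma>1, \<gamma>2, \<gamma>3}. \<forall>\<tau>\<in>edges_at p T \<gamma>. r \<tau> \<noteq> -1"
    and coker: "\<forall>b1 b2 b3. poly_le m b1 \<and> poly_le m b2 \<and> poly_le m b3 \<longrightarrow>
        (\<exists>a1 a2 a3. poly_le m a1 \<and> poly_le m a2 \<and> poly_le m a3 \<and>
           (\<lambda>z. - a1 z + a2 z - b1 z) \<in> J_vert m p T r \<gamma>1 \<and>
           (\<lambda>z. - a2 z + a3 z - b2 z) \<in> J_vert m p T r \<gamma>2 \<and>
           (\<lambda>z. a1 z - a3 z - b3 z) \<in> J_vert m p T r \<gamma>3)"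
  shows "lower_acyclic m p T (\<lambda>\<tau>. if \<tau> \<in> {\<tau>1, \<tau>2, \<tau>3} then -1 else r \<tau>)"
proof -
  have "card \<sigma> = 3" "card \<tau>1 = 2" "card \<tau>2 = 2" "card \<tau>3 = 2"
    using tri face edges_int unfolding planar_triangulation_def int_edges_def edges_def by auto
  note shape = triangle_edges[OF this edges_sub gam]
  have H0: "H0_trivial m p T r" and H1: "H1_trivial m p T r"
    using acyc lower_acyclic_iff by auto
  have "H1_trivial m p T (relax_on {\<tau>1, \<tau>2, \<tau>3} r)"
    using H1 triangle_cycle_correction[OF finite_int_edges[OF tri]] edges_int shape coker
    unfolding triangle_map_onto_def by (intro H1_trivial_relax_on) auto
  with H0_trivial_relax_on[OF H0] show ?thesis
    unfolding lower_acyclic_iff relax_on_def by blast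
qed

end
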